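(* Let $M$ be a graded finitely generated faithful graded multiplication $R$-module and $U$ a proper graded submodule of $M$, and assume $J_{gr}(M)=J_{gr}(R)M$. The following are equivalent: (i) $U$ is a graded weakly $J_{gr}$-semiprime submodule of $M$; (ii) $(U:_RM)$ is a graded weakly $J_{gr}$-semiprime ideal of $R$; (iii) $U=LM$ for some graded weakly $J_{gr}$-semiprime ideal $L$ of $R$.
   Context: Standing conventions: $\Gamma$ is a group, $R=\bigoplus_{g\in\Gamma}R_g$ is a commutative $\Gamma$-graded ring with identity, and $M=\bigoplus_{g\in\Gamma}M_g$ is a unitary $\Gamma$-graded $R$-module. $h(R)$, $h(M)$ are the homogeneous elements. A submodule $U$ is graded if $U=\bigoplus_g(U\cap M_g)$. $M$ is graded finitely generated if $M=Ra_1+\dots+Ra_n$ with $a_i\in h(M)$; graded multiplication if every graded submodule equals $KM$ for some graded ideal $K$ of $R$; faithful if $\mathrm{ann}_R(M)=0$. $(U:_RM)=\{r\in R: rM\subseteq U\}$. For a graded module $N$, a graded submodule $U\neq N$ is Gr-maximal if every graded submodule between $U$ and $N$ equals $U$ or $N$; $J_{gr}(N)$ is the intersection of all Gr-maximal submodules of $N$ ($=N$ if none); $J_{gr}(R)$ is this for $N=R$. A proper graded submodule $U$ of $M$ is graded weakly $J_{gr}$-semiprime if whenever $r_g\in h(R)$, $m_h\in h(M)$, $n\in\mathbb{Z}^+$ and $0\neq r_g^nm_h\in U$, then $r_gm_h\in U+J_{gr}(M)$; a graded ideal of $R$ is graded weakly $J_{gr}$-semiprime if it is so as a (proper) submodule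 of the graded $R$-module $R$. *)

theory Defs
  imports Main "HOL.Modules"
begin

text \<open>
  The grading group \<Gamma> is a type 'g of class group_add (a group written
  additively, not assumed commutative).  The commutative ring with identity R is the whole
  type 'r :: comm_ring_1, graded by the family Rg :: 'g \<Rightarrow> 'r set.  The unitary module M is the
  whole type 'm :: ab_group_add with scalar multiplication sc :: 'r \<Rightarrow> 'm \<Rightarrow> 'm satisfying
  the axioms of the library locale module, graded by Mg :: 'g \<Rightarrow> 'm set.
  The ring R regarded as an R-module is the instance sc = (*), Mg = Rg.
\<close>

definition direct_decomp :: "('g \<Rightarrow> 'a::ab_group_add set) \<Rightarrow> bool" where
  "direct_decomp A \<longleftrightarrow>
     (\<forall>g. 0 \<in> A g \<and> (\<forall>x\<in>A g. \<forall>y\<in>A g. x + y \<in> A g) \<and> (\<forall>x\<in>A g. - x \<in> A g)) \<and>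
     (\<forall>x. \<exists>f. finite {g. f g \<noteq> 0} \<and> (\<forall>g. f g \<in> A g) \<and> x = (\<Sum>g\<in>{g. f g \<noteq> 0}. f g)) \<and>
     (\<forall>f. finite {g. f g \<noteq> 0} \<and> (\<forall>g. f g \<in> A g) \<and> (\<Sum>g\<in>{g. f g \<noteq> 0}. f g) = 0
          \<longrightarrow> (\<forall>g. f g = 0))"

definition graded_ring :: "('g::group_add \<Rightarrow> 'r::comm_ring_1 set) \<Rightarrow> bool" where
  "graded_ring Rg \<longleftrightarrow> direct_decomp Rg \<and>
     (\<forall>g h. \<forall>a\<in>Rg g. \<forall>b\<in>Rg h. a * b \<in> Rg (g + h))"

definition graded_module ::
  "('g::group_add \<Rightarrow> 'r::comm_ring_1 set) \<Rightarrow> ('r \<Rightarrow> 'm::ab_group_add \<Rightarrow> 'm) \<Rightarrow> ('g \<Rightarrow> 'm set) \<Rightarrow> bool" where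
  "graded_module Rg sc Mg \<longleftrightarrow> graded_ring Rg \<and> module sc \<and> direct_decomp Mg \<and>
     (\<forall>g h. \<forall>a\<in>Rg g. \<forall>m\<in>Mg h. sc a m \<in> Mg (g + h))"

definition homog :: "('g \<Rightarrow> 'a set) \<Rightarrow> 'a set" where
  "homog A = (\<Union>g. A g)"

definition graded_submodule ::
  "('r::comm_ring_1 \<Rightarrow> 'm::ab_group_add \<Rightarrow> 'm) \<Rightarrow> ('g \<Rightarrow> 'm set) \<Rightarrow> 'm set \<Rightarrow> bool" where
  "graded_submodule sc Mg U \<longleftrightarrow> module.subspace sc U \<and>
     (\<forall>u\<in>U. \<exists>f. finite {g. f g \<noteq> 0} \<and> (\<forall>g. f g \<in> U \<inter> Mg g) \<and> u = (\<Sum>g\<in>{g. f g \<noteq> 0}. f g))"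

definition graded_ideal :: "('g \<Rightarrow> 'r::comm_ring_1 set) \<Rightarrow> 'r set \<Rightarrow> bool" where
  "graded_ideal Rg I \<longleftrightarrow> graded_submodule (*) Rg I"

definition ideal_times_module :: "('r::comm_ring_1 \<Rightarrow> 'm::ab_group_add \<Rightarrow> 'm) \<Rightarrow> 'r set \<Rightarrow> 'm set" where
  "ideal_times_module sc K = module.span sc {sc k m | k m. k \<in> K}"

definition colon :: "('r \<Rightarrow> 'm \<Rightarrow> 'm) \<Rightarrow> 'm set \<Rightarrow> 'r set" where
  "colon sc U = {r. \<forall>m. sc r m \<in> U}"

definition graded_fin_gen :: "('r::comm_ring_1 \<Rightarrow> 'm::ab_group_add \<Rightarrow> 'm) \<Rightarrow> ('g \<Rightarrow> 'm set) \<Rightarrow> bool" where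
  "graded_fin_gen sc Mg \<longleftrightarrow> (\<exists>A. finite A \<and> A \<subseteq> homog Mg \<and> module.span sc A = UNIV)"

definition faithful :: "('r::comm_ring_1 \<Rightarrow> 'm::ab_group_add \<Rightarrow> 'm) \<Rightarrow> bool" where
  "faithful sc \<longleftrightarrow> (\<forall>r. (\<forall>m. sc r m = 0) \<longrightarrow> r = 0)"

definition graded_multiplication ::
  "('g \<Rightarrow> 'r::comm_ring_1 set) \<Rightarrow> ('r \<Rightarrow> 'm::ab_group_add \<Rightarrow> 'm) \<Rightarrow> ('g \<Rightarrow> 'm set) \<Rightarrow> bool" where
  "graded_multiplication Rg sc Mg \<longleftrightarrow>
     (\<forall>U. graded_submodule sc Mg U \<longrightarrow> (\<exists>K. graded_ideal Rg K \<and> U = ideal_times_module sc K))"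

definition gr_maximal :: "('r::comm_ring_1 \<Rightarrow> 'm::ab_group_add \<Rightarrow> 'm) \<Rightarrow> ('g \<Rightarrow> 'm set) \<Rightarrow> 'm set \<Rightarrow> bool" where
  "gr_maximal sc Mg U \<longleftrightarrow> graded_submodule sc Mg U \<and> U \<noteq> UNIV \<and>
     (\<forall>V. graded_submodule sc Mg V \<and> U \<subseteq> V \<longrightarrow> V = U \<or> V = UNIV)"

definition J_gr :: "('r::comm_ring_1 \<Rightarrow> 'm::ab_group_add \<Rightarrow> 'm) \<Rightarrow> ('g \<Rightarrow> 'm set) \<Rightarrow> 'm set" where
  "J_gr sc Mg = \<Inter> {U. gr_maximal sc Mg U}"

definition set_plus :: "'a::plus set \<Rightarrow> 'a set \<Rightarrow> 'a set" where
  "set_plus A B = {a + b | a b. a \<in> A \<and> b \<in> B}"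

definition gr_weakly_J_semiprime ::
  "('g \<Rightarrow> 'r::comm_ring_1 set) \<Rightarrow> ('r \<Rightarrow> 'm::ab_group_add \<Rightarrow> 'm) \<Rightarrow> ('g \<Rightarrow> 'm set) \<Rightarrow> 'm set \<Rightarrow> bool" where
  "gr_weakly_J_semiprime Rg sc Mg U \<longleftrightarrow> graded_submodule sc Mg U \<and> U \<noteq> UNIV \<and>
     (\<forall>r\<in>homog Rg. \<forall>m\<in>homog Mg. \<forall>n::nat. n \<ge> 1 \<longrightarrow> sc (r ^ n) m \<noteq> 0 \<longrightarrow> sc (r ^ n) m \<in> U \<longrightarrow>
        sc r m \<in> set_plus U (J_gr sc Mg))"

definition gr_weakly_J_semiprime_ideal :: "('g \<Rightarrow> 'r::comm_ring_1 set) \<Rightarrow> 'r set \<Rightarrow> bool" where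
  "gr_weakly_J_semiprime_ideal Rg I \<longleftrightarrow> gr_weakly_J_semiprime Rg (*) Rg I"

end

theory Submission
  imports Defs
begin

text \<open>
  The engine is a cancellation law: if M is faithful and spanned by finitely many b with
  Rb = K_b M, then aM \<subseteq> LM forces a \<in> L.  A determinant-free Nakayama argument yields a
  partition of unity 1 = \<Sum> t_b with t_b \<in> K_b.  For t, t' \<in> K_b both t(ab) and t'M lie in
  Rb, so faithfulness gives a t t' \<in> L; thus every t_b^2 lies in (L : a), whose radical then
  contains \<Sum> t_b = 1.  Hence (LM :_R M) = L, and every graded submodule is U = (U :_R M) M.

  Homogeneous nilpotents lie in every Gr-maximal ideal, so r^n m = 0 forces rm \<in> J_gr(R) M =
  J_gr(M); this settles the degenerate case r^n m = 0 in both directions.  Otherwise the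
  semiprime condition is transported between U and I = (U :_R M) through the cyclic submodules
  Rm = KM: rm lies in U + J_gr(M) as soon as rkM does for every homogeneous k \<in> K; conversely
  rsM \<subseteq> U + J_gr(M) \<subseteq> (I + J_gr(R)) M is checked on homogeneous generators and cancelled.
\<close>

section \<open>Ideals\<close>

interpretation R: module "(*) :: 'r::comm_ring_1 \<Rightarrow> 'r \<Rightarrow> 'r"
  by unfold_locales (simp_all add: algebra_simps)

declare R.scale_scale [simp del] \<comment> \<open>it is associativity read backwards\<close>

abbreviation ideal :: "'r::comm_ring_1 set \<Rightarrow> bool" where
  "ideal I \<equiv> R.subspace I"

lemma ideal_mult_right: "ideal I \<Longrightarrow> x \<in> I \<Longrightarrow> x * y \<in> I"
  by (metis R.subspace_scale mult.commute)

lemma ideal_eq_UNIV: "ideal I \<Longrightarrow> 1 \<in> I \<Longrightarrow> I = UNIV"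
  using R.subspace_scale by fastforce

lemma ideal_quotient: "ideal I \<Longrightarrow> ideal {x. a * x \<in> I}"
  by (rule module_hom.subspace_linear_preimage[OF R.module_hom_scale_self])

lemma ideal_power_diff:
  assumes "ideal I" "x - y \<in> I"
  shows "x ^ n - y ^ n \<in> I"
  using ideal_mult_right[OF assms] by (simp add: power_diff_sumr2)

lemma ideal_power_add:
  fixes x y :: "'r::comm_ring_1"
  assumes I: "ideal I" and "x ^ p \<in> I" "y ^ q \<in> I"
  shows "(x + y) ^ (p + q) \<in> I"
proof -
  have "x ^ k * y ^ (p + q - k) \<in> I" for k
  proof (cases "p \<le> k")
    case True
    then have e: "x ^ k = x ^ p * x ^ (k - p)" by (metis le_add_diff_inverse power_add)
    show ?thesis unfolding e by (rule ideal_mult_right[OF I ideal_mult_right[OF I assms(2)]])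
  next
    case False
    then have "p + q - k = q + (p - k)" by simp
    then have e: "y ^ (p + q - k) = y ^ q * y ^ (p - k)" by (simp add: power_add)
    show ?thesis unfolding e by (rule R.subspace_scale[OF I ideal_mult_right[OF I assms(3)]])
  qed
  then have "of_nat ((p + q) choose k) * x ^ k * y ^ (p + q - k) \<in> I" for k
    using R.subspace_scale[OF I] by (simp only: mult.assoc)
  then show ?thesis
    unfolding binomial_ring by (rule R.subspace_sum[OF I])
qed

lemma ideal_power_sum:
  assumes I: "ideal I" and "finite A" "\<And>b. b \<in> A \<Longrightarrow> f b ^ 2 \<in> I"
  shows "\<exists>N. (\<Sum>b\<in>A. f b) ^ N \<in> I"
  using assms(2,3)
proof (induction A rule: finite_induct)
  case empty
  then show ?case using R.subspace_0[OF I] by (intro exI[of _ 1]) simp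
next
  case (insert y A)
  then obtain N where "(\<Sum>b\<in>A. f b) ^ N \<in> I" by auto
  then have "(f y + (\<Sum>b\<in>A. f b)) ^ (2 + N) \<in> I"
    using ideal_power_add[OF I] insert.prems by blast
  then show ?case using insert.hyps by (metis sum.insert)
qed

lemma power_mult_eq_mult_power:
  fixes r s :: "'r::comm_ring_1"
  assumes "n \<ge> 1"
  shows "(r * s) ^ n = s ^ (n - 1) * (r ^ n * s)"
  using assms by (metis mult.commute mult.left_commute power_mult_distrib power_eq_if not_one_le_zero)

definition sum_ideals :: "'b set \<Rightarrow> ('b \<Rightarrow> 'r::comm_ring_1 set) \<Rightarrow> 'r set" where
  "sum_ideals A K = {\<Sum>b\<in>A. t b | t. \<forall>b\<in>A. t b \<in> K b}"

lemma ideal_sum_ideals: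
  assumes "\<And>b. b \<in> A \<Longrightarrow> ideal (K b)"
  shows "ideal (sum_ideals A K)"
  unfolding R.subspace_def sum_ideals_def
proof (intro conjI allI ballI)
  show "0 \<in> {\<Sum>b\<in>A. t b | t. \<forall>b\<in>A. t b \<in> K b}"
    using R.subspace_0[OF assms] by (auto intro!: exI[of _ "\<lambda>_. 0"])
  fix x y assume "x \<in> {\<Sum>b\<in>A. t b | t. \<forall>b\<in>A. t b \<in> K b}" "y \<in> {\<Sum>b\<in>A. t b | t. \<forall>b\<in>A. t b \<in> K b}"
  then obtain t t' where "\<forall>b\<in>A. t b \<in> K b" "x = (\<Sum>b\<in>A. t b)" "\<forall>b\<in>A. t' b \<in> K b" "y = (\<Sum>b\<in>A. t' b)"
    by blast
  then show "x + y \<in> {\<Sum>b\<in>A. t b | t. \<forall>b\<in>A. t b \<in> K b}"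
    using R.subspace_add[OF assms] by (auto intro!: exI[of _ "\<lambda>b. t b + t' b"] simp: sum.distrib)
next
  fix c x assume "x \<in> {\<Sum>b\<in>A. t b | t. \<forall>b\<in>A. t b \<in> K b}"
  then obtain t where "\<forall>b\<in>A. t b \<in> K b" "x = (\<Sum>b\<in>A. t b)" by blast
  then show "c * x \<in> {\<Sum>b\<in>A. t b | t. \<forall>b\<in>A. t b \<in> K b}"
    using R.subspace_scale[OF assms] by (auto intro!: exI[of _ "\<lambda>b. c * t b"] simp: sum_distrib_left)
qed

lemma mem_sum_ideals:
  assumes "finite A" "b \<in> A" "k \<in> K b" "\<And>b. b \<in> A \<Longrightarrow> ideal (K b)"
  shows "k \<in> sum_ideals A K"
proof -
  have "k = (\<Sum>b'\<in>A. if b' = b then k else 0)" using assms(1,2) by simp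
  moreover have "\<forall>b'\<in>A. (if b' = b then k else 0) \<in> K b'"
    using assms(3) R.subspace_0[OF assms(4)] by auto
  ultimately show ?thesis unfolding sum_ideals_def by blast
qed

section \<open>Products of ideals and modules\<close>

context module
begin

lemma subspace_set_plus:
  assumes S: "subspace S" and T: "subspace T"
  shows "subspace (set_plus S T)"
  unfolding subspace_def set_plus_def
proof (intro conjI allI ballI)
  show "0 \<in> {a + b |a b. a \<in> S \<and> b \<in> T}"
    using subspace_0[OF S] subspace_0[OF T] by force
  fix x y assume "x \<in> {a + b |a b. a \<in> S \<and> b \<in> T}" "y \<in> {a + b |a b. a \<in> S \<and> b \<in> T}"
  then obtain a b a' b' where "x = a + b" "y = a' + b'" "a \<in> S" "b \<in> T" "a' \<in> S" "b' \<in> T"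
    by blast
  moreover have "x + y = (a + a') + (b + b')"
    using calculation by (simp add: algebra_simps)
  ultimately show "x + y \<in> {a + b |a b. a \<in> S \<and> b \<in> T}"
    using subspace_add[OF S] subspace_add[OF T] by blast
next
  fix c x assume "x \<in> {a + b |a b. a \<in> S \<and> b \<in> T}"
  then obtain a b where "x = a + b" "a \<in> S" "b \<in> T" by blast
  then show "c *s x \<in> {a + b |a b. a \<in> S \<and> b \<in> T}"
    using subspace_scale[OF S] subspace_scale[OF T] by (force simp: scale_right_distrib)
qed

lemma set_plus_mem_left: "subspace T \<Longrightarrow> x \<in> S \<Longrightarrow> x \<in> set_plus S T"
  unfolding set_plus_def using subspace_0 by force

lemma set_plus_mem_right: "subspace S \<Longrightarrow> x \<in> T \<Longrightarrow> x \<in> set_plus S T"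
  unfolding set_plus_def using subspace_0 by force

lemma subspace_ideal_times_module: "subspace (ideal_times_module scale K)"
  by (simp add: ideal_times_module_def)

lemma scale_mem_ideal_times_module: "k \<in> K \<Longrightarrow> k *s m \<in> ideal_times_module scale K"
  unfolding ideal_times_module_def by (rule span_base) blast

lemma ideal_times_module_mono: "K \<subseteq> L \<Longrightarrow> ideal_times_module scale K \<subseteq> ideal_times_module scale L"
  unfolding ideal_times_module_def by (rule span_mono) blast

lemma set_plus_ideal_times_module_subset:
  assumes "ideal K" "ideal L"
  shows "set_plus (ideal_times_module scale K) (ideal_times_module scale L)
    \<subseteq> ideal_times_module scale (set_plus K L)"
proof -
  have "K \<subseteq> set_plus K L" "L \<subseteq> set_plus K L"
    using R.set_plus_mem_left[OF assms(2)] R.set_plus_mem_right[OF assms(1)] by blast+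
  then have "ideal_times_module scale K \<subseteq> ideal_times_module scale (set_plus K L)"
    "ideal_times_module scale L \<subseteq> ideal_times_module scale (set_plus K L)"
    by (simp_all add: ideal_times_module_mono)
  then show ?thesis
    unfolding set_plus_def[of "ideal_times_module scale K"]
    using subspace_add[OF subspace_ideal_times_module] by blast
qed

lemma scale_set_plus_mem:
  "a \<in> set_plus K L \<Longrightarrow> a *s m \<in> set_plus (ideal_times_module scale K) (ideal_times_module scale L)"
proof -
  assume "a \<in> set_plus K L"
  then obtain k l where "a = k + l" "k \<in> K" "l \<in> L" by (auto simp: set_plus_def)
  then show ?thesis
    unfolding set_plus_def using scale_mem_ideal_times_module scale_left_distrib by blast
qed

lemma subspace_scale_preimage: "subspace S \<Longrightarrow> subspace {x. c *s x \<in> S}"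
  by (rule module_hom.subspace_linear_preimage[OF module_hom_scale_self])

lemma scale_mult_mem_span_scale:
  assumes "span {m} = ideal_times_module scale K" "k \<in> K"
  shows "(s * k) *s m' \<in> span {s *s m}"
proof -
  obtain c where "k *s m' = c *s m"
    using scale_mem_ideal_times_module[OF assms(2)] assms(1) by (auto simp: span_singleton)
  then have "(s * k) *s m' = c *s (s *s m)"
    by (metis scale_left_commute scale_scale)
  then show ?thesis by (simp add: span_singleton)
qed

lemma scale_mem_if_generators:
  assumes "span A = UNIV" "subspace S" "\<And>b. b \<in> A \<Longrightarrow> c *s b \<in> S"
  shows "c *s m \<in> S"
  using span_minimal[OF _ subspace_scale_preimage[OF assms(2)], of A c] assms(1,3) by auto

definition combinations_in :: "'a set \<Rightarrow> 'b set \<Rightarrow> 'b set" where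
  "combinations_in T A = {\<Sum>z\<in>A. f z *s z | f. \<forall>z\<in>A. f z \<in> T}"

lemma subspace_combinations_in:
  assumes T: "ideal T"
  shows "subspace (combinations_in T A)"
  unfolding subspace_def combinations_in_def
proof (intro conjI allI ballI)
  show "0 \<in> {\<Sum>z\<in>A. f z *s z | f. \<forall>z\<in>A. f z \<in> T}"
    using R.subspace_0[OF T] by (auto intro!: exI[of _ "\<lambda>_. 0"])
  fix x y assume "x \<in> {\<Sum>z\<in>A. f z *s z | f. \<forall>z\<in>A. f z \<in> T}"
    "y \<in> {\<Sum>z\<in>A. f z *s z | f. \<forall>z\<in>A. f z \<in> T}"
  then obtain f g where "\<forall>z\<in>A. f z \<in> T" "x = (\<Sum>z\<in>A. f z *s z)"
    "\<forall>z\<in>A. g z \<in> T" "y = (\<Sum>z\<in>A. g z *s z)"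
    by blast
  then show "x + y \<in> {\<Sum>z\<in>A. f z *s z | f. \<forall>z\<in>A. f z \<in> T}"
    using R.subspace_add[OF T]
    by (auto intro!: exI[of _ "\<lambda>z. f z + g z"] simp: sum.distrib scale_left_distrib)
next
  fix c x assume "x \<in> {\<Sum>z\<in>A. f z *s z | f. \<forall>z\<in>A. f z \<in> T}"
  then obtain f where "\<forall>z\<in>A. f z \<in> T" "x = (\<Sum>z\<in>A. f z *s z)" by blast
  then show "c *s x \<in> {\<Sum>z\<in>A. f z *s z | f. \<forall>z\<in>A. f z \<in> T}"
    using R.subspace_scale[OF T]
    by (auto intro!: exI[of _ "\<lambda>z. c * f z"] simp: scale_sum_right)
qed

lemma combinations_in_insert:
  assumes "finite A" "y \<notin> A" "u \<in> combinations_in T (insert y A)"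
  shows "\<exists>\<tau>\<in>T. \<exists>w\<in>combinations_in T A. u = \<tau> *s y + w"
  using assms by (fastforce simp: combinations_in_def)

lemma scale_combinations_in_eq_0:
  assumes "\<And>z. z \<in> A \<Longrightarrow> e *s z = 0" "w \<in> combinations_in T A"
  shows "e *s w = 0"
proof -
  obtain f where "w = (\<Sum>z\<in>A. f z *s z)" using assms(2) by (auto simp: combinations_in_def)
  then have "e *s w = (\<Sum>z\<in>A. f z *s (e *s z))"
    by (simp add: scale_sum_right mult.commute)
  then show ?thesis using assms(1) by simp
qed

text \<open>
  The induction removes one generator y at a time:
  from c y \<in> T y + (T A) one gets (c - \<tau>) y \<in> T A, and the remaining generators satisfy
  the hypothesis for the scalar (c - \<tau>) c, which is congruent to c^2 modulo T.\<close>
lemma nakayama: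
  assumes T: "ideal T" and "finite A"
    and "\<forall>x\<in>A. c *s x \<in> combinations_in T A"
  shows "\<exists>N e. c ^ N - e \<in> T \<and> (\<forall>x\<in>A. e *s x = 0)"
  using assms(2,3)
proof (induction A arbitrary: c rule: finite_induct)
  case empty
  then show ?case using R.subspace_0[OF T] by (intro exI[of _ 0] exI[of _ 1]) simp
next
  case (insert y A)
  note comb = subspace_combinations_in[OF T]
  have "c *s y \<in> combinations_in T (insert y A)" using insert.prems by blast
  then obtain \<tau> wy where \<tau>: "\<tau> \<in> T" and wy: "wy \<in> combinations_in T A" "c *s y = \<tau> *s y + wy"
    using combinations_in_insert[OF insert.hyps(1,2)] by blast
  define d where "d = c - \<tau>"
  have dy: "d *s y = wy" using wy(2) by (simp add: d_def scale_left_diff_distrib)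
  have "(d * c) *s x \<in> combinations_in T A" if "x \<in> A" for x
  proof -
    have "c *s x \<in> combinations_in T (insert y A)" using insert.prems that by blast
    then obtain \<sigma> wx where "\<sigma> \<in> T" "wx \<in> combinations_in T A" and cx: "c *s x = \<sigma> *s y + wx"
      using combinations_in_insert[OF insert.hyps(1,2)] by blast
    have "(d * c) *s x = d *s (c *s x)" by simp
    also have "\<dots> = d *s (\<sigma> *s y) + d *s wx"
      by (simp only: cx scale_right_distrib)
    also have "\<dots> = \<sigma> *s wy + d *s wx"
      by (simp only: scale_left_commute[of d] dy)
    finally have "(d * c) *s x = \<sigma> *s wy + d *s wx" .
    then show ?thesis
      using subspace_add[OF comb] subspace_scale[OF comb] wy(1) \<open>wx \<in> combinations_in T A\<close>
      by simp
  qed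
  then obtain N e where e: "(d * c) ^ N - e \<in> T" "\<forall>x\<in>A. e *s x = 0"
    using insert.IH by blast
  have "c - d \<in> T" using \<tau> by (simp add: d_def)
  then have "c ^ Suc N - d ^ Suc N \<in> T" by (rule ideal_power_diff[OF T])
  then have "c ^ N * (c ^ Suc N - d ^ Suc N) + d * ((d * c) ^ N - e) \<in> T"
    using R.subspace_add[OF T] R.subspace_scale[OF T] e(1) by blast
  also have "c ^ N * (c ^ Suc N - d ^ Suc N) + d * ((d * c) ^ N - e) = c ^ (N + Suc N) - e * d"
    by (simp add: power_add power_mult_distrib right_diff_distrib mult_ac)
  finally have power: "c ^ (N + Suc N) - e * d \<in> T" .
  have kill: "(e * d) *s x = 0" if "x \<in> insert y A" for x
  proof (cases "x = y")
    case True
    have "(e * d) *s y = e *s wy" by (simp flip: dy)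
    then show ?thesis using True scale_combinations_in_eq_0[OF _ wy(1)] e(2) by simp
  next
    case False
    have "e *s x = 0" using False that e(2) by simp
    then show ?thesis by (metis mult.commute scale_scale scale_zero_right)
  qed
  show ?case
  proof (intro exI conjI)
    show "c ^ (N + Suc N) - e * d \<in> T" by (rule power)
    show "\<forall>x\<in>insert y A. (e * d) *s x = 0" using kill by blast
  qed
qed

lemma ideal_times_module_subset_combinations_in:
  assumes T: "ideal T" and "finite A" "span A = UNIV"
  shows "ideal_times_module scale T \<subseteq> combinations_in T A"
  unfolding ideal_times_module_def
proof (rule span_minimal[OF _ subspace_combinations_in[OF T]], safe)
  fix k m assume "k \<in> T"
  obtain u where "m = (\<Sum>v\<in>A. u v *s v)"
    using span_finite[OF assms(2)] assms(3) by auto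
  then have "k *s m = (\<Sum>v\<in>A. (k * u v) *s v)" by (simp add: scale_sum_right)
  then show "k *s m \<in> combinations_in T A"
    unfolding combinations_in_def using ideal_mult_right[OF T \<open>k \<in> T\<close>]
    by (intro CollectI exI[of _ "\<lambda>v. k * u v"]) simp
qed

lemma scale_mem_scale_image:
  assumes L: "ideal L" and "span {b} = ideal_times_module scale K" "t \<in> K"
    and "v \<in> ideal_times_module scale L"
  shows "t *s v \<in> (\<lambda>\<kappa>. \<kappa> *s b) ` L"
proof -
  have "subspace ((\<lambda>\<kappa>. \<kappa> *s b) ` L)"
    by (rule module_hom.subspace_image[OF module_hom_scale_left L])
  then have sub: "subspace {v. t *s v \<in> (\<lambda>\<kappa>. \<kappa> *s b) ` L}"
    by (rule subspace_scale_preimage)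
  have "{k *s m | k m. k \<in> L} \<subseteq> {v. t *s v \<in> (\<lambda>\<kappa>. \<kappa> *s b) ` L}"
  proof safe
    fix k m assume "k \<in> L"
    obtain c where "t *s m = c *s b"
      using scale_mem_ideal_times_module[OF assms(3)] assms(2) by (auto simp: span_singleton)
    then have "t *s (k *s m) = (k * c) *s b" by (metis scale_left_commute scale_scale)
    then show "t *s (k *s m) \<in> (\<lambda>\<kappa>. \<kappa> *s b) ` L"
      using R.subspace_scale[OF L \<open>k \<in> L\<close>, of c] by (auto simp: mult.commute)
  qed
  then show ?thesis
    using span_minimal[OF _ sub] assms(4) unfolding ideal_times_module_def by blast
qed

lemma faithful_scale_eq:
  assumes "faithful scale" "\<And>m. x *s m = y *s m"
  shows "x = y"
proof -
  have "\<forall>m. (x - y) *s m = 0" using assms(2) by (simp add: scale_left_diff_distrib)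
  then show ?thesis using assms(1) unfolding faithful_def by auto
qed

end

section \<open>Cancellation in faithful multiplication modules\<close>

locale faithful_mult_generated_module = module scale
  for scale :: "'a::comm_ring_1 \<Rightarrow> 'b::ab_group_add \<Rightarrow> 'b" (infixr \<open>*s\<close> 75) +
  fixes A :: "'b set" and K :: "'b \<Rightarrow> 'a set"
  assumes faithful: "faithful scale"
    and finite_generators: "finite A" and span_generators: "span A = UNIV"
    and ideal_K: "b \<in> A \<Longrightarrow> ideal (K b)"
    and span_singleton_eq: "b \<in> A \<Longrightarrow> span {b} = ideal_times_module scale (K b)"
begin

lemma eq_0_if_annihilates_generators:
  assumes "\<forall>b\<in>A. e *s b = 0"
  shows "e = 0"
proof -
  have "e *s m = 0" for m
  proof -
    obtain u where "m = (\<Sum>v\<in>A. u v *s v)"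
      using span_finite[OF finite_generators] span_generators by auto
    then have "e *s m = (\<Sum>v\<in>A. u v *s (e *s v))" by (simp add: scale_sum_right mult.commute)
    then show ?thesis using assms by simp
  qed
  then show ?thesis using faithful unfolding faithful_def by blast
qed

lemma partition_of_unity: "\<exists>t. (\<forall>b\<in>A. t b \<in> K b) \<and> (\<Sum>b\<in>A. t b) = 1"
proof -
  define T where "T = sum_ideals A K"
  have T: "ideal T" unfolding T_def by (rule ideal_sum_ideals[OF ideal_K])
  have "x \<in> combinations_in T A" if "x \<in> A" for x
  proof -
    have "K x \<subseteq> T" unfolding T_def using mem_sum_ideals[OF finite_generators that] ideal_K by blast
    then have "span {x} \<subseteq> ideal_times_module scale T"
      using span_singleton_eq[OF that] ideal_times_module_mono by simp
    also have "\<dots> \<subseteq> combinations_in T A"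
      by (rule ideal_times_module_subset_combinations_in[OF T finite_generators span_generators])
    finally show ?thesis using span_base by blast
  qed
  then obtain N e where "1 ^ N - e \<in> T" "\<forall>x\<in>A. e *s x = 0"
    using nakayama[OF T finite_generators, of 1] by auto
  moreover from this(2) have "e = 0" by (rule eq_0_if_annihilates_generators)
  ultimately have "1 \<in> T" by simp
  then show ?thesis unfolding T_def sum_ideals_def by auto
qed

lemma ideal_times_module_cancel:
  assumes L: "ideal L" and a: "\<And>m. a *s m \<in> ideal_times_module scale L"
  shows "a \<in> L"
proof -
  obtain t where t: "\<forall>b\<in>A. t b \<in> K b" "(\<Sum>b\<in>A. t b) = 1"
    using partition_of_unity by blast
  have "a * t1 * t2 \<in> L" if b: "b \<in> A" and "t1 \<in> K b" "t2 \<in> K b" for b t1 t2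
  proof -
    obtain \<kappa> where "\<kappa> \<in> L" and \<kappa>: "t1 *s (a *s b) = \<kappa> *s b"
      using scale_mem_scale_image[OF L span_singleton_eq[OF b] \<open>t1 \<in> K b\<close> a] by blast
    have "(a * t1 * t2) *s m = (\<kappa> * t2) *s m" for m
    proof -
      obtain c where c: "t2 *s m = c *s b"
        using scale_mem_ideal_times_module[OF \<open>t2 \<in> K b\<close>] span_singleton_eq[OF b]
        by (auto simp: span_singleton)
      have "(a * t1 * t2) *s m = (a * t1) *s (t2 *s m)" by simp
      also have "\<dots> = c *s (t1 *s (a *s b))" by (simp add: c mult_ac)
      also have "\<dots> = \<kappa> *s (t2 *s m)" by (simp only: \<kappa>) (simp add: c mult.commute)
      finally show ?thesis by simp
    qed
    then have "a * t1 * t2 = \<kappa> * t2" by (rule faithful_scale_eq[OF faithful])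
    then show ?thesis using ideal_mult_right[OF L \<open>\<kappa> \<in> L\<close>] by simp
  qed
  then have "t b ^ 2 \<in> {x. a * x \<in> L}" if "b \<in> A" for b
    using t(1) that by (simp add: power2_eq_square mult.assoc)
  then obtain N where "(\<Sum>b\<in>A. t b) ^ N \<in> {x. a * x \<in> L}"
    using ideal_power_sum[OF ideal_quotient[OF L] finite_generators] by blast
  then show ?thesis using t(2) by simp
qed

end

section \<open>Graded modules\<close>

lemma sum_over_support:
  assumes "finite S" "{g. f g \<noteq> 0} \<subseteq> S"
  shows "(\<Sum>g\<in>S. f g) = (\<Sum>g\<in>{g. f g \<noteq> (0::'a::comm_monoid_add)}. f g)"
  using assms by (intro sum.mono_neutral_right) auto

lemma graded_module_module: "graded_module Rg sc Mg \<Longrightarrow> module sc"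
  by (simp add: graded_module_def)

lemma graded_ring_graded_module: "graded_ring Rg \<Longrightarrow> graded_module Rg (*) Rg"
  by (simp add: graded_module_def graded_ring_def R.module_axioms)

lemma homog_mult:
  "graded_ring Rg \<Longrightarrow> r \<in> homog Rg \<Longrightarrow> s \<in> homog Rg \<Longrightarrow> r * s \<in> homog Rg"
  unfolding graded_ring_def homog_def by blast

lemma homog_scale:
  "graded_module Rg sc Mg \<Longrightarrow> r \<in> homog Rg \<Longrightarrow> m \<in> homog Mg \<Longrightarrow> sc r m \<in> homog Mg"
  unfolding graded_module_def homog_def by blast

lemma graded_ideal_ideal: "graded_ideal Rg K \<Longrightarrow> ideal K"
  by (simp add: graded_ideal_def graded_submodule_def)

lemma graded_submodule_span_singleton:
  assumes gm: "graded_module Rg sc Mg" and "m \<in> Mg h"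
  shows "graded_submodule sc Mg (module.span sc {m})"
proof -
  interpret module sc using gm by (rule graded_module_module)
  have decomp: "direct_decomp Rg" and mult: "\<And>g h a m. a \<in> Rg g \<Longrightarrow> m \<in> Mg h \<Longrightarrow> sc a m \<in> Mg (g + h)"
    using gm by (auto simp: graded_module_def graded_ring_def)
  show ?thesis unfolding graded_submodule_def
  proof (intro conjI ballI)
    show "subspace (span {m})" by simp
    fix u assume "u \<in> span {m}"
    then obtain r where u: "u = sc r m" by (auto simp: span_singleton)
    from decomp obtain f where f: "finite {g. f g \<noteq> 0}" "\<And>g. f g \<in> Rg g" "r = (\<Sum>g\<in>{g. f g \<noteq> 0}. f g)"
      unfolding direct_decomp_def by blast
    define S where "S = {g. f g \<noteq> 0}"
    define F where "F d = sc (f (d - h)) m" for d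
    have finite_S: "finite S" using f(1) by (simp add: S_def)
    have support: "{d. F d \<noteq> 0} \<subseteq> (\<lambda>g. g + h) ` S"
    proof
      fix d assume "d \<in> {d. F d \<noteq> 0}"
      then have "f (d - h) \<noteq> 0" by (auto simp: F_def)
      then show "d \<in> (\<lambda>g. g + h) ` S" unfolding S_def by (intro image_eqI[of _ _ "d - h"]) auto
    qed
    have "(\<Sum>d\<in>{d. F d \<noteq> 0}. F d) = (\<Sum>d\<in>(\<lambda>g. g + h) ` S. F d)"
      using support finite_S by (intro sum_over_support[symmetric]) auto
    also have "\<dots> = (\<Sum>g\<in>S. sc (f g) m)"
      by (subst sum.reindex) (auto simp: inj_on_def F_def)
    also have "\<dots> = u" using u f(3) by (simp add: S_def scale_sum_left)
    finally have "u = (\<Sum>d\<in>{d. F d \<noteq> 0}. F d)" ..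
    moreover have "finite {d. F d \<noteq> 0}" using support finite_S finite_subset by blast
    moreover have "F d \<in> span {m} \<inter> Mg d" for d
      using mult[OF f(2) \<open>m \<in> Mg h\<close>, of "d - h"] by (auto simp: F_def span_singleton)
    ultimately show "\<exists>f. finite {g. f g \<noteq> 0} \<and> (\<forall>g. f g \<in> span {m} \<inter> Mg g) \<and> u = (\<Sum>g\<in>{g. f g \<noteq> 0}. f g)"
      by blast
  qed
qed

lemma graded_submodule_set_plus:
  assumes gm: "graded_module Rg sc Mg"
    and P: "graded_submodule sc Mg P" and Q: "graded_submodule sc Mg Q"
  shows "graded_submodule sc Mg (set_plus P Q)"
proof -
  interpret module sc using gm by (rule graded_module_module)
  have add: "\<And>g x y. x \<in> Mg g \<Longrightarrow> y \<in> Mg g \<Longrightarrow> x + y \<in> Mg g"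
    using gm by (simp add: graded_module_def direct_decomp_def)
  have "subspace P" "subspace Q" using P Q by (auto simp: graded_submodule_def)
  show ?thesis unfolding graded_submodule_def
  proof (intro conjI ballI)
    show "subspace (set_plus P Q)" by (rule subspace_set_plus) fact+
    fix u assume "u \<in> set_plus P Q"
    then obtain p q where u: "u = p + q" "p \<in> P" "q \<in> Q" by (auto simp: set_plus_def)
    obtain f where f: "finite {g. f g \<noteq> 0}" "\<And>g. f g \<in> P \<inter> Mg g" "p = (\<Sum>g\<in>{g. f g \<noteq> 0}. f g)"
      using P u(2) unfolding graded_submodule_def by blast
    obtain h where h: "finite {g. h g \<noteq> 0}" "\<And>g. h g \<in> Q \<inter> Mg g" "q = (\<Sum>g\<in>{g. h g \<noteq> 0}. h g)"
      using Q u(3) unfolding graded_submodule_def by blast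
    define S where "S = {g. f g \<noteq> 0} \<union> {g. h g \<noteq> 0}"
    define F where "F g = f g + h g" for g
    have finite_S: "finite S" using f(1) h(1) by (simp add: S_def)
    have support: "{g. F g \<noteq> 0} \<subseteq> S" by (auto simp: F_def S_def)
    have "(\<Sum>g\<in>{g. F g \<noteq> 0}. F g) = (\<Sum>g\<in>S. F g)"
      using sum_over_support[OF finite_S support] ..
    also have "\<dots> = (\<Sum>g\<in>S. f g) + (\<Sum>g\<in>S. h g)" by (simp add: F_def sum.distrib)
    also have "\<dots> = u"
      using u f(3) h(3) sum_over_support[OF finite_S, of f] sum_over_support[OF finite_S, of h]
      by (simp add: S_def)
    finally have "u = (\<Sum>g\<in>{g. F g \<noteq> 0}. F g)" ..
    moreover have "finite {g. F g \<noteq> 0}" using support finite_S finite_subset by blast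
    moreover have "F g \<in> set_plus P Q \<inter> Mg g" for g
      using f(2)[of g] h(2)[of g] add by (auto simp: F_def set_plus_def)
    ultimately show "\<exists>f. finite {g. f g \<noteq> 0} \<and> (\<forall>g. f g \<in> set_plus P Q \<inter> Mg g) \<and> u = (\<Sum>g\<in>{g. f g \<noteq> 0}. f g)"
      by blast
  qed
qed

lemma subspace_J_gr: "module sc \<Longrightarrow> module.subspace sc (J_gr sc Mg)"
  unfolding J_gr_def
  by (rule module.subspace_Inter) (auto simp: gr_maximal_def graded_submodule_def)

text \<open>
  If x lay outside a Gr-maximal ideal P, then P + Rx = R would give 1 = p + cx with cx
  nilpotent, making p = 1 - cx a unit.\<close>
lemma homog_nilpotent_mem_J_gr:
  fixes Rg :: "'g::group_add \<Rightarrow> 'r::comm_ring_1 set"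
  assumes gr: "graded_ring Rg" and "x \<in> homog Rg" and nil: "x ^ n = 0"
  shows "x \<in> J_gr (*) Rg"
  unfolding J_gr_def
proof
  fix P assume "P \<in> {U. gr_maximal (*) Rg U}"
  then have P: "graded_submodule (*) Rg P" "P \<noteq> UNIV"
    and max: "\<And>V. graded_submodule (*) Rg V \<Longrightarrow> P \<subseteq> V \<Longrightarrow> V = P \<or> V = UNIV"
    by (auto simp: gr_maximal_def)
  have gm: "graded_module Rg (*) Rg" by (rule graded_ring_graded_module[OF gr])
  have "ideal P" using P(1) by (simp add: graded_submodule_def)
  show "x \<in> P"
  proof (rule ccontr)
    assume "x \<notin> P"
    define V where "V = set_plus P (R.span {x})"
    obtain g where "x \<in> Rg g" using \<open>x \<in> homog Rg\<close> by (auto simp: homog_def)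
    have "graded_submodule (*) Rg V"
      unfolding V_def using graded_submodule_set_plus[OF gm P(1) graded_submodule_span_singleton[OF gm]]
      by (metis \<open>x \<in> Rg g\<close>)
    moreover have "P \<subseteq> V" unfolding V_def by (auto intro: R.set_plus_mem_left)
    moreover have "x \<in> V" unfolding V_def by (intro R.set_plus_mem_right[OF \<open>ideal P\<close>] R.span_base) simp
    ultimately have "V = UNIV" using max \<open>x \<notin> P\<close> by blast
    then have "1 \<in> V" by simp
    then obtain p c where "1 = p + c * x" "p \<in> P" by (auto simp: V_def set_plus_def R.span_singleton)
    then have "p = 1 - c * x" by (simp add: algebra_simps)
    moreover have "1 = (1 - c * x) * (\<Sum>i<n. (c * x) ^ i)"
      using one_diff_power_eq[of "c * x" n] nil by (simp add: power_mult_distrib)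
    ultimately have "1 = p * (\<Sum>i<n. (c * x) ^ i)" by simp
    then have "1 \<in> P" using ideal_mult_right[OF \<open>ideal P\<close> \<open>p \<in> P\<close>] by metis
    then show False using ideal_eq_UNIV[OF \<open>ideal P\<close>] P(2) by simp
  qed
qed

lemma ideal_times_module_subset_if_homog:
  assumes gm: "graded_module Rg sc Mg" and K: "graded_ideal Rg K"
    and S: "module.subspace sc S" and hom: "\<And>k m. k \<in> K \<Longrightarrow> k \<in> homog Rg \<Longrightarrow> sc k m \<in> S"
  shows "ideal_times_module sc K \<subseteq> S"
  unfolding ideal_times_module_def
proof -
  interpret module sc using gm by (rule graded_module_module)
  have "sc k m \<in> S" if "k \<in> K" for k m
  proof -
    obtain f where f: "\<And>g. f g \<in> K \<inter> Rg g" "k = (\<Sum>g\<in>{g. f g \<noteq> 0}. f g)"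
      using K \<open>k \<in> K\<close> unfolding graded_ideal_def graded_submodule_def by blast
    then have "sc k m = (\<Sum>g\<in>{g. f g \<noteq> 0}. sc (f g) m)" by (simp add: scale_sum_left)
    also have "\<dots> \<in> S" using f(1) hom by (intro subspace_sum[OF S]) (auto simp: homog_def)
    finally show ?thesis .
  qed
  then show "span {sc k m |k m. k \<in> K} \<subseteq> S" by (intro span_minimal[OF _ S]) blast
qed

lemma scale_mem_if_homog_multipliers:
  assumes gm: "graded_module Rg sc Mg" and K: "graded_ideal Rg K"
    and m: "module.span sc {m} = ideal_times_module sc K" and S: "module.subspace sc S"
    and hom: "\<And>k m'. k \<in> K \<Longrightarrow> k \<in> homog Rg \<Longrightarrow> sc (r * k) m' \<in> S"
  shows "sc r m \<in> S"
proof -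
  interpret module sc using gm by (rule graded_module_module)
  have "ideal_times_module sc K \<subseteq> {x. sc r x \<in> S}"
    using hom by (intro ideal_times_module_subset_if_homog[OF gm K subspace_scale_preimage[OF S]]) simp
  then show ?thesis using m span_base by blast
qed

section \<open>Graded weakly J_gr-semiprime submodules\<close>

lemma colon_ne_UNIV:
  assumes "module sc" "U \<noteq> UNIV"
  shows "colon sc U \<noteq> UNIV"
proof
  assume "colon sc U = UNIV"
  then have "sc 1 m \<in> U" for m by (auto simp: colon_def)
  then have "m \<in> U" for m by (simp add: module.scale_one[OF assms(1)])
  then show False using assms(2) by blast
qed

locale faithful_fg_gr_multiplication_module =
  fixes Rg :: "'g::group_add \<Rightarrow> 'r::comm_ring_1 set"
    and sc :: "'r \<Rightarrow> 'm::ab_group_add \<Rightarrow> 'm"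
    and Mg :: "'g \<Rightarrow> 'm set"
  assumes graded_module: "graded_module Rg sc Mg"
    and graded_fin_gen: "graded_fin_gen sc Mg"
    and faithful: "faithful sc"
    and graded_multiplication: "graded_multiplication Rg sc Mg"
begin

sublocale module sc
  by (rule graded_module_module[OF graded_module])

lemma graded_ring: "graded_ring Rg"
  using graded_module by (simp add: graded_module_def)

lemma homog_span_singleton_eq:
  assumes "m \<in> homog Mg"
  obtains K where "graded_ideal Rg K" "span {m} = ideal_times_module sc K"
proof -
  obtain h where "m \<in> Mg h" using assms by (auto simp: homog_def)
  then have "graded_submodule sc Mg (span {m})"
    by (rule graded_submodule_span_singleton[OF graded_module])
  then show ?thesis
    using that graded_multiplication by (auto simp: graded_multiplication_def)
qed

lemma homog_generators:
  obtains A where "finite A" "A \<subseteq> homog Mg" "span A = UNIV"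
  using graded_fin_gen that by (auto simp: graded_fin_gen_def)

lemma ideal_times_module_cancel:
  assumes "ideal L" "\<And>m. sc a m \<in> ideal_times_module sc L"
  shows "a \<in> L"
proof -
  obtain A where A: "finite A" "A \<subseteq> homog Mg" "span A = UNIV" by (rule homog_generators)
  have "\<exists>K. ideal K \<and> span {b} = ideal_times_module sc K" if "b \<in> A" for b
  proof -
    have "b \<in> homog Mg" using A(2) \<open>b \<in> A\<close> by blast
    then obtain K where "graded_ideal Rg K" "span {b} = ideal_times_module sc K"
      by (rule homog_span_singleton_eq)
    then show ?thesis using graded_ideal_ideal by blast
  qed
  then obtain K where "\<And>b. b \<in> A \<Longrightarrow> ideal (K b) \<and> span {b} = ideal_times_module sc (K b)"
    by metis
  then interpret faithful_mult_generated_module sc A K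
    using A faithful by unfold_locales auto
  show ?thesis using ideal_times_module_cancel assms by blast
qed

lemma colon_ideal_times_module: "ideal L \<Longrightarrow> colon sc (ideal_times_module sc L) = L"
  unfolding colon_def using ideal_times_module_cancel scale_mem_ideal_times_module by blast

lemma colon_graded_submodule:
  assumes "graded_submodule sc Mg U"
  shows "graded_ideal Rg (colon sc U)" "U = ideal_times_module sc (colon sc U)"
proof -
  obtain K where "graded_ideal Rg K" "U = ideal_times_module sc K"
    using graded_multiplication assms by (auto simp: graded_multiplication_def)
  moreover from this have "colon sc U = K"
    using colon_ideal_times_module graded_ideal_ideal by blast
  ultimately show "graded_ideal Rg (colon sc U)" "U = ideal_times_module sc (colon sc U)"
    by simp_all
qed

context
  assumes J_gr_eq: "J_gr sc Mg = ideal_times_module sc (J_gr (*) Rg)"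
begin

lemma subspace_J_gr_module: "subspace (J_gr sc Mg)"
  by (simp add: J_gr_eq subspace_ideal_times_module)

lemma scale_mem_J_gr_if_power_annihilates:
  assumes r: "r \<in> homog Rg" and m: "m \<in> homog Mg" and "n \<ge> 1" and "sc (r ^ n) m = 0"
  shows "sc r m \<in> J_gr sc Mg"
proof -
  obtain K where K: "graded_ideal Rg K" "span {m} = ideal_times_module sc K"
    using homog_span_singleton_eq[OF m] by blast
  show ?thesis
  proof (rule scale_mem_if_homog_multipliers[OF graded_module K subspace_J_gr_module])
    fix k m' assume "k \<in> K" "k \<in> homog Rg"
    have "sc (r ^ n * k) m'' = 0" for m''
      using scale_mult_mem_span_scale[OF K(2) \<open>k \<in> K\<close>, of "r ^ n" m''] \<open>sc (r ^ n) m = 0\<close>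
      by (auto simp: span_singleton)
    then have "r ^ n * k = 0" using faithful by (simp add: faithful_def)
    then have "(r * k) ^ n = 0" unfolding power_mult_eq_mult_power[OF \<open>n \<ge> 1\<close>] by simp
    then have "r * k \<in> J_gr (*) Rg"
      using homog_nilpotent_mem_J_gr[OF graded_ring homog_mult[OF graded_ring r \<open>k \<in> homog Rg\<close>]]
      by blast
    then show "sc (r * k) m' \<in> J_gr sc Mg"
      unfolding J_gr_eq by (rule scale_mem_ideal_times_module)
  qed
qed

lemma gr_weakly_J_semiprime_if_colon:
  assumes U: "graded_submodule sc Mg U" "U \<noteq> UNIV"
    and colon: "gr_weakly_J_semiprime_ideal Rg (colon sc U)"
  shows "gr_weakly_J_semiprime Rg sc Mg U"
  unfolding gr_weakly_J_semiprime_def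
proof (intro conjI ballI allI impI)
  show "graded_submodule sc Mg U" "U \<noteq> UNIV" by (fact U)+
  have "subspace U" using U(1) by (simp add: graded_submodule_def)
  have colon_semiprime: "r * s \<in> set_plus (colon sc U) (J_gr (*) Rg)"
    if "r \<in> homog Rg" "s \<in> homog Rg" "n \<ge> 1" "r ^ n * s \<noteq> 0" "r ^ n * s \<in> colon sc U"
    for r s and n :: nat
    using colon that unfolding gr_weakly_J_semiprime_ideal_def gr_weakly_J_semiprime_def by blast
  fix r m and n :: nat
  assume r: "r \<in> homog Rg" and m: "m \<in> homog Mg" and "n \<ge> 1"
    and "sc (r ^ n) m \<noteq> 0" "sc (r ^ n) m \<in> U"
  obtain K where K: "graded_ideal Rg K" "span {m} = ideal_times_module sc K"
    using homog_span_singleton_eq[OF m] by blast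
  show "sc r m \<in> set_plus U (J_gr sc Mg)"
  proof (rule scale_mem_if_homog_multipliers[OF graded_module K
        subspace_set_plus[OF \<open>subspace U\<close> subspace_J_gr_module]])
    fix k m' assume k: "k \<in> K" "k \<in> homog Rg"
    have "span {sc (r ^ n) m} \<subseteq> U"
      using span_minimal \<open>subspace U\<close> \<open>sc (r ^ n) m \<in> U\<close> by blast
    then have "r ^ n * k \<in> colon sc U"
      using scale_mult_mem_span_scale[OF K(2) k(1)] by (auto simp: colon_def)
    show "sc (r * k) m' \<in> set_plus U (J_gr sc Mg)"
    proof (cases "r ^ n * k = 0")
      case True
      then have "(r * k) ^ n = 0" unfolding power_mult_eq_mult_power[OF \<open>n \<ge> 1\<close>] by simp
      then have "r * k \<in> J_gr (*) Rg"
        using homog_nilpotent_mem_J_gr[OF graded_ring homog_mult[OF graded_ring r k(2)]] by blast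
      then have "sc (r * k) m' \<in> J_gr sc Mg"
        unfolding J_gr_eq by (rule scale_mem_ideal_times_module)
      then show ?thesis by (rule set_plus_mem_right[OF \<open>subspace U\<close>])
    next
      case False
      then have "r * k \<in> set_plus (colon sc U) (J_gr (*) Rg)"
        using colon_semiprime[OF r k(2) \<open>n \<ge> 1\<close>] \<open>r ^ n * k \<in> colon sc U\<close> by blast
      then have "sc (r * k) m' \<in> set_plus (ideal_times_module sc (colon sc U))
          (ideal_times_module sc (J_gr (*) Rg))"
        by (rule scale_set_plus_mem)
      then show ?thesis
        unfolding J_gr_eq by (simp only: colon_graded_submodule(2)[OF U(1), symmetric])
    qed
  qed
qed

lemma gr_weakly_J_semiprime_ideal_colon:
  assumes U: "gr_weakly_J_semiprime Rg sc Mg U"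
  shows "gr_weakly_J_semiprime_ideal Rg (colon sc U)"
  unfolding gr_weakly_J_semiprime_ideal_def gr_weakly_J_semiprime_def
proof (intro conjI ballI allI impI)
  have gU: "graded_submodule sc Mg U" and "U \<noteq> UNIV"
    using U by (simp_all add: gr_weakly_J_semiprime_def)
  have "subspace U" using gU by (simp add: graded_submodule_def)
  have semiprime: "sc r m \<in> set_plus U (J_gr sc Mg)"
    if "r \<in> homog Rg" "m \<in> homog Mg" "n \<ge> 1" "sc (r ^ n) m \<noteq> 0" "sc (r ^ n) m \<in> U"
    for r m and n :: nat
    using U that unfolding gr_weakly_J_semiprime_def by blast
  define I where "I = colon sc U"
  define J where "J = J_gr ((*) :: 'r \<Rightarrow> 'r \<Rightarrow> 'r) Rg"
  have I: "graded_ideal Rg I" "U = ideal_times_module sc I"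
    unfolding I_def by (fact colon_graded_submodule[OF gU])+
  have "ideal I" "ideal J"
    using graded_ideal_ideal[OF I(1)] subspace_J_gr[OF R.module_axioms] by (simp_all add: J_def)
  show "graded_submodule (*) Rg (colon sc U)"
    using colon_graded_submodule(1)[OF gU] by (simp add: graded_ideal_def)
  show "colon sc U \<noteq> UNIV" by (rule colon_ne_UNIV[OF module_axioms \<open>U \<noteq> UNIV\<close>])
  fix r s and n :: nat
  assume r: "r \<in> homog Rg" and s: "s \<in> homog Rg" and "n \<ge> 1"
    and "r ^ n * s \<noteq> 0" and "r ^ n * s \<in> colon sc U"
  obtain A where A: "finite A" "A \<subseteq> homog Mg" "span A = UNIV" by (rule homog_generators)
  have rs: "sc (r * s) m \<in> set_plus U (J_gr sc Mg)" for m
  proof (rule scale_mem_if_generators[OF A(3) subspace_set_plus[OF \<open>subspace U\<close> subspace_J_gr_module]])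
    fix b assume "b \<in> A"
    then have b: "b \<in> homog Mg" using A(2) by blast
    show "sc (r * s) b \<in> set_plus U (J_gr sc Mg)"
    proof (cases "sc (r ^ n * s) b = 0")
      case True
      have "sc ((r * s) ^ n) b = sc (s ^ (n - 1)) (sc (r ^ n * s) b)"
        unfolding power_mult_eq_mult_power[OF \<open>n \<ge> 1\<close>] by (simp only: scale_scale)
      then have "sc ((r * s) ^ n) b = 0" using True by simp
      then have "sc (r * s) b \<in> J_gr sc Mg"
        using scale_mem_J_gr_if_power_annihilates homog_mult[OF graded_ring r s] b \<open>n \<ge> 1\<close> by blast
      then show ?thesis by (rule set_plus_mem_right[OF \<open>subspace U\<close>])
    next
      case False
      have "sc (r ^ n) (sc s b) = sc (r ^ n * s) b" by simp
      moreover have "sc (r ^ n * s) b \<in> U"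
        using \<open>r ^ n * s \<in> colon sc U\<close> by (simp add: colon_def)
      ultimately have "sc r (sc s b) \<in> set_plus U (J_gr sc Mg)"
        using semiprime[OF r homog_scale[OF graded_module s b] \<open>n \<ge> 1\<close>] False by simp
      then show ?thesis by simp
    qed
  qed
  moreover have "set_plus U (J_gr sc Mg) \<subseteq> ideal_times_module sc (set_plus I J)"
    unfolding J_gr_eq J_def[symmetric]
    using set_plus_ideal_times_module_subset[OF \<open>ideal I\<close> \<open>ideal J\<close>] I(2) by simp
  ultimately have "r * s \<in> set_plus I J"
    using ideal_times_module_cancel R.subspace_set_plus[OF \<open>ideal I\<close> \<open>ideal J\<close>] by blast
  then show "r * s \<in> set_plus (colon sc U) (J_gr (*) Rg)" by (simp add: I_def J_def)
qed

end

lemma ex_gr_weakly_J_semiprime_ideal_iff: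
  assumes "graded_submodule sc Mg U"
  shows "(\<exists>L. gr_weakly_J_semiprime_ideal Rg L \<and> U = ideal_times_module sc L)
    \<longleftrightarrow> gr_weakly_J_semiprime_ideal Rg (colon sc U)"
proof
  assume "\<exists>L. gr_weakly_J_semiprime_ideal Rg L \<and> U = ideal_times_module sc L"
  then obtain L where L: "gr_weakly_J_semiprime_ideal Rg L" "U = ideal_times_module sc L" by blast
  then have "ideal L"
    by (simp add: gr_weakly_J_semiprime_ideal_def gr_weakly_J_semiprime_def graded_submodule_def)
  then have "colon sc U = L" using L(2) colon_ideal_times_module by simp
  then show "gr_weakly_J_semiprime_ideal Rg (colon sc U)" using L(1) by simp
next
  assume "gr_weakly_J_semiprime_ideal Rg (colon sc U)"
  then show "\<exists>L. gr_weakly_J_semiprime_ideal Rg L \<and> U = ideal_times_module sc L"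
    using colon_graded_submodule(2)[OF assms] by blast
qed

end

theorem mainTheorem17:
  fixes Rg :: "'g::group_add \<Rightarrow> 'r::comm_ring_1 set"
    and sc :: "'r \<Rightarrow> 'm::ab_group_add \<Rightarrow> 'm"
    and Mg :: "'g \<Rightarrow> 'm set"
    and U :: "'m set"
  assumes "graded_module Rg sc Mg"
    and "graded_fin_gen sc Mg"
    and "faithful sc"
    and "graded_multiplication Rg sc Mg"
    and "graded_submodule sc Mg U" and "U \<noteq> UNIV"
    and "J_gr sc Mg = ideal_times_module sc (J_gr (*) Rg)"
  shows "(gr_weakly_J_semiprime Rg sc Mg U \<longleftrightarrow> gr_weakly_J_semiprime_ideal Rg (colon sc U))
       \<and> (gr_weakly_J_semiprime_ideal Rg (colon sc U) \<longleftrightarrow>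
            (\<exists>L. gr_weakly_J_semiprime_ideal Rg L \<and> U = ideal_times_module sc L))"
proof -
  interpret faithful_fg_gr_multiplication_module Rg sc Mg
    using assms(1-4) by unfold_locales
  show ?thesis
    using gr_weakly_J_semiprime_if_colon[OF assms(7,5,6)] gr_weakly_J_semiprime_ideal_colon[OF assms(7)]
      ex_gr_weakly_J_semiprime_ideal_iff[OF assms(5)]
    by blast
qed

end
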